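(* In every run of the algorithm described in the context, for every correct process $p_i$ and every $j\in\{1,\dots,n\}$, the following hold at every time: (R1) if $w\_sync_i[i]=w\_sync_i[j]=x$, then $p_i$ has sent $x$ messages of type $\textsc{write}(-,-)$ to $p_j$; (R2) if $w\_sync_i[i]>w\_sync_i[j]=x$, then $p_i$ has sent $x+1$ messages of type $\textsc{write}(-,-)$ to $p_j$.
   Context: Model. There are $n$ asynchronous processes $p_1,\dots,p_n$, of which up to $t<n/2$ may crash; a process runs its algorithm correctly until it crashes, and a process that never crashes is correct. Each ordered pair of processes is linked by a reliable (no loss, corruption, duplication or creation), asynchronous, not necessarily FIFO channel. $p_w$ is the single writer, invoking writes sequentially; $v_0$ is the initial value. Messages: $\textsc{write}(b,v)$ with $b\in\{0,1\}$, which stands for the two types $\textsc{write0}(v)$ and $\textsc{write1}(v)$; $\textsc{read}()$; $\textsc{proceed}()$. Variables of $p_i$. These are: $history_i$ with $history_i[0]=v_0$; $w\_sync_i[1..n]$, initially all $0$; $r\_sync_i[1..n]$, initially all $0$. $\mathsf{write}(v)$ by $p_w$: $wsn\gets w\_sync_w[w]+1$; $w\_sync_w[w]\gets wsn$; $history_w[wsn]\gets v$. Send $\textsc{write}(wsn\bmod 2,v)$ to each $p_j$ with $w\_sync_w[j]=wsn-1$. Wait until at least $n-t$ indices $j$ have $w\_sync_w[j]=wsn$. Return. $\mathsf{read}()$ by $p_i$: $r\_sync_i[i]\gets r\_sync_i[i]+1$ and call the new value $rsn$. Send $\textsc{read}()$ to all $p_j$ with $j\ne i$. Wait until at least $n-t$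 indices $j$ have $r\_sync_i[j]=rsn$. Let $sn\gets w\_sync_i[i]$. Wait until at least $n-t$ indices $j$ have $w\_sync_i[j]\ge sn$. Return $history_i[sn]$. On receipt of $\textsc{write}(b,v)$ from $p_j$ at $p_i$: Wait until $b=(w\_sync_i[j]+1)\bmod 2$. Let $wsn\gets w\_sync_i[j]+1$. If $wsn=w\_sync_i[i]+1$, then set $w\_sync_i[i]\gets wsn$ and $history_i[wsn]\gets v$, and send $\textsc{write}(wsn\bmod 2,v)$ to each $p_\ell$ with $w\_sync_i[\ell]=wsn-1$. Else, if $wsn<w\_sync_i[i]$, send $\textsc{write}((wsn+1)\bmod 2,history_i[wsn+1])$ to $p_j$. Finally set $w\_sync_i[j]\gets wsn$. On receipt of $\textsc{read}()$ from $p_j$ at $p_i$: Let $sn\gets w\_sync_i[i]$; wait until $w\_sync_i[j]\ge sn$; send $\textsc{proceed}()$ to $p_j$. On receipt of $\textsc{proceed}()$ from $p_j$ at $p_i$: $r\_sync_i[j]\gets r\_sync_i[j]+1$. Message handlers run concurrently; a waiting handler does not block the reception of other messages. *)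

theory Defs
  imports Main "HOL-Library.Multiset"
begin

text \<open>Messages. The bit b of WRITE(b,v) is a natural number taken modulo 2.\<close>
datatype 'v msg = WriteMsg nat 'v | ReadMsg | ProceedMsg

fun is_write :: "'v msg \<Rightarrow> bool" where
  "is_write (WriteMsg b v) = True"
| "is_write _ = False"

text \<open>Handlers that have received their message and may be waiting.
  HWrite j b v: receipt of WRITE(b,v) from p_j (waiting on the parity of b).
  HRead j sn: receipt of READ() from p_j, with sn = w_sync_i[i] read on receipt.\<close>
datatype 'v handler = HWrite nat nat 'v | HRead nat nat

datatype opstate = Idle | WWait nat | RWait1 nat | RWait2 nat

record 'v pstate =
  history :: "nat \<Rightarrow> 'v"
  w_sync  :: "nat \<Rightarrow> nat"
  r_sync  :: "nat \<Rightarrow> nat"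
  opst    :: opstate
  pend    :: "'v handler multiset"

text \<open>Global configuration: local states, crashed processes, messages in transit
  (reliable, non-FIFO channels), and the (ghost) record of all messages ever sent,
  as triples (sender, receiver, message).\<close>
record 'v config =
  ls      :: "nat \<Rightarrow> 'v pstate"
  crashed :: "nat set"
  transit :: "(nat \<times> nat \<times> 'v msg) multiset"
  sent    :: "(nat \<times> nat \<times> 'v msg) multiset"

definition procs :: "nat \<Rightarrow> nat set" where
  "procs n = {1..n}"

definition send_to :: "nat \<Rightarrow> nat set \<Rightarrow> 'v msg \<Rightarrow> (nat \<times> nat \<times> 'v msg) multiset" where
  "send_to i S m = mset_set ((\<lambda>j. (i, j, m)) ` S)"

definition init_pstate :: "'v \<Rightarrow> 'v pstate" where
  "init_pstate v0 = \<lparr> history = (\<lambda>_. v0), w_sync = (\<lambda>_. 0), r_sync = (\<lambda>_. 0),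
                      opst = Idle, pend = {#} \<rparr>"

definition init_config :: "'v \<Rightarrow> 'v config" where
  "init_config v0 = \<lparr> ls = (\<lambda>_. init_pstate v0), crashed = {}, transit = {#}, sent = {#} \<rparr>"

definition upd :: "'v config \<Rightarrow> nat \<Rightarrow> 'v pstate \<Rightarrow> (nat \<times> nat \<times> 'v msg) multiset \<Rightarrow> 'v config" where
  "upd c i s M = c\<lparr> ls := (ls c)(i := s), transit := transit c + M, sent := sent c + M \<rparr>"

text \<open>One atomic step of the system; n processes p_1..p_n, at most t crashes, writer p_w.
  Each step is the atomic execution of a local action (an operation invocation,
  the resumption of an operation whose wait condition holds, a message reception,
  the body of a handler whose wait condition holds), or a crash.\<close>
inductive step :: "nat \<Rightarrow> nat \<Rightarrow> nat \<Rightarrow> 'v config \<Rightarrow> 'v config \<Rightarrow> bool"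
  for n t w where
  invoke_write:
  "\<lbrakk> i = w; i \<in> procs n; i \<notin> crashed c; s = ls c i; opst s = Idle;
     wsn = w_sync s i + 1; ws' = (w_sync s)(i := wsn) \<rbrakk> \<Longrightarrow>
   step n t w c (upd c i (s\<lparr> w_sync := ws', history := (history s)(wsn := v), opst := WWait wsn \<rparr>)
                  (send_to i {j \<in> procs n. ws' j = wsn - 1} (WriteMsg (wsn mod 2) v)))"
| return_write:
  "\<lbrakk> i \<in> procs n; i \<notin> crashed c; s = ls c i; opst s = WWait wsn;
     card {j \<in> procs n. w_sync s j = wsn} \<ge> n - t \<rbrakk> \<Longrightarrow>
   step n t w c (upd c i (s\<lparr> opst := Idle \<rparr>) {#})"
| invoke_read:
  "\<lbrakk> i \<in> procs n; i \<notin> crashed c; s = ls c i; opst s = Idle;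
     rsn = r_sync s i + 1 \<rbrakk> \<Longrightarrow>
   step n t w c (upd c i (s\<lparr> r_sync := (r_sync s)(i := rsn), opst := RWait1 rsn \<rparr>)
                  (send_to i {j \<in> procs n. j \<noteq> i} ReadMsg))"
| read_phase2:
  "\<lbrakk> i \<in> procs n; i \<notin> crashed c; s = ls c i; opst s = RWait1 rsn;
     card {j \<in> procs n. r_sync s j = rsn} \<ge> n - t \<rbrakk> \<Longrightarrow>
   step n t w c (upd c i (s\<lparr> opst := RWait2 (w_sync s i) \<rparr>) {#})"
| return_read:
  "\<lbrakk> i \<in> procs n; i \<notin> crashed c; s = ls c i; opst s = RWait2 sn;
     card {j \<in> procs n. w_sync s j \<ge> sn} \<ge> n - t \<rbrakk> \<Longrightarrow>
   step n t w c (upd c i (s\<lparr> opst := Idle \<rparr>) {#})"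
| recv_write:
  "\<lbrakk> i \<in> procs n; i \<notin> crashed c; s = ls c i; (j, i, WriteMsg b v) \<in># transit c \<rbrakk> \<Longrightarrow>
   step n t w c (c\<lparr> ls := (ls c)(i := s\<lparr> pend := pend s + {# HWrite j b v #} \<rparr>),
                    transit := transit c - {# (j, i, WriteMsg b v) #} \<rparr>)"
| recv_read:
  "\<lbrakk> i \<in> procs n; i \<notin> crashed c; s = ls c i; (j, i, ReadMsg) \<in># transit c \<rbrakk> \<Longrightarrow>
   step n t w c (c\<lparr> ls := (ls c)(i := s\<lparr> pend := pend s + {# HRead j (w_sync s i) #} \<rparr>),
                    transit := transit c - {# (j, i, ReadMsg) #} \<rparr>)"
| recv_proceed:
  "\<lbrakk> i \<in> procs n; i \<notin> crashed c; s = ls c i; (j, i, ProceedMsg) \<in># transit c \<rbrakk> \<Longrightarrow>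
   step n t w c (c\<lparr> ls := (ls c)(i := s\<lparr> r_sync := (r_sync s)(j := r_sync s j + 1) \<rparr>),
                    transit := transit c - {# (j, i, ProceedMsg) #} \<rparr>)"
| handle_write:
  "\<lbrakk> i \<in> procs n; i \<notin> crashed c; s = ls c i; HWrite j b v \<in># pend s;
     b = (w_sync s j + 1) mod 2; wsn = w_sync s j + 1;
     (s', M) = (if wsn = w_sync s i + 1 then
                  (let ws1 = (w_sync s)(i := wsn) in
                   (s\<lparr> w_sync := ws1, history := (history s)(wsn := v) \<rparr>,
                    send_to i {l \<in> procs n. ws1 l = wsn - 1} (WriteMsg (wsn mod 2) v)))
                else if wsn < w_sync s i then
                  (s, {# (i, j, WriteMsg ((wsn + 1) mod 2) (history s (wsn + 1))) #})
                else (s, {#})) \<rbrakk> \<Longrightarrow>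
   step n t w c (upd c i (s'\<lparr> w_sync := (w_sync s')(j := wsn),
                              pend := pend s - {# HWrite j b v #} \<rparr>) M)"
| handle_read:
  "\<lbrakk> i \<in> procs n; i \<notin> crashed c; s = ls c i; HRead j sn \<in># pend s;
     w_sync s j \<ge> sn \<rbrakk> \<Longrightarrow>
   step n t w c (upd c i (s\<lparr> pend := pend s - {# HRead j sn #} \<rparr>) {# (i, j, ProceedMsg) #})"
| crash:
  "\<lbrakk> i \<in> procs n; i \<notin> crashed c; card (insert i (crashed c)) \<le> t \<rbrakk> \<Longrightarrow>
   step n t w c (c\<lparr> crashed := insert i (crashed c) \<rparr>)"

definition is_run :: "nat \<Rightarrow> nat \<Rightarrow> nat \<Rightarrow> 'v \<Rightarrow> (nat \<Rightarrow> 'v config) \<Rightarrow> bool" where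
  "is_run n t w v0 \<rho> \<longleftrightarrow> \<rho> 0 = init_config v0 \<and>
     (\<forall>k. step n t w (\<rho> k) (\<rho> (Suc k)) \<or> \<rho> (Suc k) = \<rho> k)"

definition correct :: "(nat \<Rightarrow> 'v config) \<Rightarrow> nat \<Rightarrow> bool" where
  "correct \<rho> i \<longleftrightarrow> (\<forall>k. i \<notin> crashed (\<rho> k))"

definition writes_sent :: "'v config \<Rightarrow> nat \<Rightarrow> nat \<Rightarrow> nat" where
  "writes_sent c i j = size (filter_mset (\<lambda>(a, b, m). a = i \<and> b = j \<and> is_write m) (sent c))"

abbreviation wsync :: "'v config \<Rightarrow> nat \<Rightarrow> nat \<Rightarrow> nat" where
  "wsync c i j \<equiv> w_sync (ls c i) j"

end

theory Submission imports Defs begin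

text \<open>Both claims are the two cases of one invariant of every process \<open>p\<^sub>i\<close> and peer
  \<open>j \<noteq> i\<close>: \<open>w_sync\<^sub>i[j] \<le> w_sync\<^sub>i[i]\<close>, and \<open>p\<^sub>i\<close> has sent \<open>w_sync\<^sub>i[j]\<close> WRITE messages to
  \<open>p\<^sub>j\<close> when the two entries agree and one more otherwise. Only the WRITE handler of
  \<open>p\<^sub>i\<close> sends WRITE messages to \<open>p\<^sub>j\<close> or changes these entries, and it preserves the
  invariant because each message it sends to \<open>p\<^sub>j\<close> is matched by \<open>p\<^sub>j\<close> falling
  one step behind \<open>p\<^sub>i\<close>.\<close>

definition writes_in :: "nat \<Rightarrow> nat \<Rightarrow> (nat \<times> nat \<times> 'v msg) multiset \<Rightarrow> nat" where
  "writes_in i j M = size (filter_mset (\<lambda>(a, b, m). a = i \<and> b = j \<and> is_write m) M)"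

lemma writes_sent_eq_writes_in: "writes_sent c i j = writes_in i j (sent c)"
  by (simp add: writes_sent_def writes_in_def)

lemma writes_in_add_mset [simp]:
  "writes_in i j (add_mset (p, q, m) M) =
     (if p = i \<and> q = j \<and> is_write m then 1 else 0) + writes_in i j M"
  by (simp add: writes_in_def)

lemma writes_in_send_to [simp]:
  assumes "finite S"
  shows "writes_in i j (send_to p S m) = (if p = i \<and> j \<in> S \<and> is_write m then 1 else 0)"
proof -
  have "{x \<in> (\<lambda>q. (p, q, m)) ` S. case x of (a, b, m') \<Rightarrow> a = i \<and> b = j \<and> is_write m'}
        = (if p = i \<and> j \<in> S \<and> is_write m then {(p, j, m)} else {})"
    by auto
  then show ?thesis
    using assms by (simp add: writes_in_def send_to_def)
qed

lemma writes_in_union [simp]: "writes_in i j (M + N) = writes_in i j M + writes_in i j N"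
  by (simp add: writes_in_def)

lemma ls_upd [simp]: "ls (upd c p s M) = (ls c)(p := s)"
  by (simp add: upd_def)

lemma sent_upd [simp]: "sent (upd c p s M) = sent c + M"
  by (simp add: upd_def)

lemma finite_procs_filter [simp]: "finite {j \<in> procs n. P j}"
  by (simp add: procs_def)

definition write_count_inv :: "nat \<Rightarrow> nat \<Rightarrow> 'v config \<Rightarrow> bool" where
  "write_count_inv i j c \<longleftrightarrow> wsync c i j \<le> wsync c i i \<and>
     writes_sent c i j = (if wsync c i j = wsync c i i then wsync c i j else wsync c i j + 1)"

lemma write_count_inv_init: "write_count_inv i j (init_config v0)"
  by (simp add: write_count_inv_def init_config_def init_pstate_def writes_sent_def)

lemma write_count_inv_step:
  assumes "step n t w c c'" and "j \<in> procs n" and "i \<noteq> j" and "write_count_inv i j c"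
  shows "write_count_inv i j c'"
  using assms
proof (induction rule: step.induct)
  case (handle_write p c s l b v wsn s' M)
  consider (adopt) "wsn = w_sync s p + 1" | (forward) "wsn < w_sync s p"
    | (level) "w_sync s p \<le> wsn" "wsn \<noteq> w_sync s p + 1"
    by linarith
  then show ?case
  proof cases
    case adopt
    txt \<open>\<open>p\<^sub>i\<close> advances and forwards the value to exactly the peers that were level
      with it, which now lag one step behind.\<close>
    then show ?thesis
      using handle_write by (auto simp: write_count_inv_def writes_sent_eq_writes_in Let_def)
  next
    case forward
    txt \<open>The sender is behind \<open>p\<^sub>i\<close> after the update and receives the next value.\<close>
    then show ?thesis
      using handle_write by (auto simp: write_count_inv_def writes_sent_eq_writes_in)
  next
    case level
    txt \<open>For the sender \<open>p\<^sub>j\<close>, the invariant gives \<open>wsn \<le> w_sync\<^sub>i[i] + 1\<close>, so \<open>p\<^sub>j\<close>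
      becomes level with \<open>p\<^sub>i\<close>, having already been sent the one extra message.\<close>
    then show ?thesis
      using handle_write by (auto simp: write_count_inv_def writes_sent_eq_writes_in)
  qed
qed (auto simp: write_count_inv_def writes_sent_eq_writes_in)

lemma write_count_inv_run:
  assumes run: "is_run n t w v0 \<rho>" and "j \<in> procs n" and "i \<noteq> j"
  shows "write_count_inv i j (\<rho> k)"
proof (induction k)
  case 0
  show ?case
    using run write_count_inv_init by (simp add: is_run_def)
next
  case (Suc k)
  from run have "step n t w (\<rho> k) (\<rho> (Suc k)) \<or> \<rho> (Suc k) = \<rho> k"
    by (simp add: is_run_def)
  then show ?case
    using Suc.IH write_count_inv_step assms(2,3) by metis
qed

theorem lemma5:
  fixes n t w :: nat and v0 :: 'v and \<rho> :: "nat \<Rightarrow> 'v config"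
  assumes "w \<in> procs n"
    and "2 * t < n"
    and "is_run n t w v0 \<rho>"
    and "i \<in> procs n" and "correct \<rho> i"
    and "j \<in> procs n" and "j \<noteq> i"
  shows "\<forall>k x.
     (wsync (\<rho> k) i i = x \<and> wsync (\<rho> k) i j = x \<longrightarrow> writes_sent (\<rho> k) i j = x) \<and>
     (wsync (\<rho> k) i i > x \<and> wsync (\<rho> k) i j = x \<longrightarrow> writes_sent (\<rho> k) i j = x + 1)"
proof (intro allI)
  fix k x
  have "write_count_inv i j (\<rho> k)"
    using write_count_inv_run assms(3,6,7) by metis
  then show "(wsync (\<rho> k) i i = x \<and> wsync (\<rho> k) i j = x \<longrightarrow> writes_sent (\<rho> k) i j = x) \<and>
     (wsync (\<rho> k) i i > x \<and> wsync (\<rho> k) i j = x \<longrightarrow> writes_sent (\<rho> k) i j = x + 1)"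
    unfolding write_count_inv_def by auto
qed

end
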